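(* Let $(\star)$ be a linear system over $\mathbb{F}_q$ in $k$ variables, and suppose that $(\star)$ is equivalent to a linear system $(\star')$ whose coefficient matrix (after reordering the variables) has the block form $\begin{pmatrix}A_1&0\\0&A_2\end{pmatrix}$ with $A_1\in\mathbb{F}_q^{m_1\times k_1}$, $A_2\in\mathbb{F}_q^{m_2\times k_2}$ and $m_1,m_2,k_1,k_2\ne0$. Then $(\star)$ is moderate if and only if the systems with coefficient matrices $A_1$ and $A_2$ are both moderate.
   Context: A linear system with coefficient matrix $A=(a_{ij})\in\mathbb{F}_q^{m\times k}$ has solutions $(x_1,\dots,x_k)\in(\mathbb{F}_q^n)^k$ with $\sum_j a_{ij}x_j=0$ for all $i$. Two systems are equivalent if each equation of one is a linear combination of the equations of the other. A $(\star)$-shape is a solution with $x_1,\dots,x_k$ pairwise distinct. A system is moderate if there exist constants $\beta,\gamma>0$ with $\gamma<q$ such that for every $n$, every $S\subseteq\mathbb{F}_q^n$ with $|S|\ge\beta\gamma^n$ contains a shape $(x_1,\dots,x_k)\in S^k$. *)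

theory Defs
  imports Complex_Main
begin

text \<open>The field F_q is a finite field type 'a (q = CARD('a)).
  A vector of F_q^n is a function nat \<Rightarrow> 'a vanishing outside {..<n}.
  A linear system with m equations in k variables is given by a coefficient
  function A :: nat \<Rightarrow> nat \<Rightarrow> 'a, of which only the entries A i j with
  i < m, j < k matter. A k-tuple (x_1,...,x_k) of vectors is a function
  x :: nat \<Rightarrow> (nat \<Rightarrow> 'a), indexed by j < k.\<close>

definition vecs :: "nat \<Rightarrow> (nat \<Rightarrow> 'a::zero) set" where
  "vecs n = {v. \<forall>t\<ge>n. v t = 0}"

definition is_solution ::
  "nat \<Rightarrow> nat \<Rightarrow> (nat \<Rightarrow> nat \<Rightarrow> 'a::field) \<Rightarrow> (nat \<Rightarrow> nat \<Rightarrow> 'a) \<Rightarrow> bool" where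
  "is_solution m k A x \<longleftrightarrow> (\<forall>i<m. \<forall>t. (\<Sum>j<k. A i j * x j t) = 0)"

definition is_shape ::
  "nat \<Rightarrow> nat \<Rightarrow> (nat \<Rightarrow> nat \<Rightarrow> 'a::field) \<Rightarrow> (nat \<Rightarrow> nat \<Rightarrow> 'a) \<Rightarrow> bool" where
  "is_shape m k A x \<longleftrightarrow> is_solution m k A x \<and> inj_on x {..<k}"

definition moderate :: "nat \<Rightarrow> nat \<Rightarrow> (nat \<Rightarrow> nat \<Rightarrow> 'a::{finite,field}) \<Rightarrow> bool" where
  "moderate m k A \<longleftrightarrow>
     (\<exists>\<beta> \<gamma> :: real. \<beta> > 0 \<and> \<gamma> > 0 \<and> \<gamma> < real (card (UNIV :: 'a set)) \<and>
        (\<forall>n. \<forall>S :: (nat \<Rightarrow> 'a) set. S \<subseteq> vecs n \<longrightarrow>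
            real (card S) \<ge> \<beta> * \<gamma> ^ n \<longrightarrow>
            (\<exists>x. (\<forall>j<k. x j \<in> S) \<and> is_shape m k A x)))"

definition rows_in_span ::
  "nat \<Rightarrow> nat \<Rightarrow> (nat \<Rightarrow> nat \<Rightarrow> 'a::field) \<Rightarrow> nat \<Rightarrow> (nat \<Rightarrow> nat \<Rightarrow> 'a) \<Rightarrow> bool" where
  "rows_in_span k m A m' B \<longleftrightarrow>
     (\<forall>i<m. \<exists>c. \<forall>j<k. A i j = (\<Sum>l<m'. c l * B l j))"

definition equiv_systems ::
  "nat \<Rightarrow> nat \<Rightarrow> (nat \<Rightarrow> nat \<Rightarrow> 'a::field) \<Rightarrow> nat \<Rightarrow> (nat \<Rightarrow> nat \<Rightarrow> 'a) \<Rightarrow> bool" where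
  "equiv_systems k m A m' B \<longleftrightarrow> rows_in_span k m A m' B \<and> rows_in_span k m' B m A"

definition block_diag ::
  "nat \<Rightarrow> nat \<Rightarrow> (nat \<Rightarrow> nat \<Rightarrow> 'a::zero) \<Rightarrow> (nat \<Rightarrow> nat \<Rightarrow> 'a) \<Rightarrow> nat \<Rightarrow> nat \<Rightarrow> 'a" where
  "block_diag m1 k1 A1 A2 i j =
     (if i < m1 \<and> j < k1 then A1 i j
      else if m1 \<le> i \<and> k1 \<le> j then A2 (i - m1) (j - k1) else 0)"

end

theory Submission imports Defs begin

text \<open>Moderateness depends only on the set of shapes. Equivalent systems have the same
  solutions, permuting the variables permutes the shapes, and a shape of the block-diagonal
  system is a shape of A1 followed by a shape of A2 with disjoint entries. So a shape of the
  block system restricts to shapes of both blocks. Conversely, a set S of size at least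
  (\<beta>1 + \<beta>2 + k1) \<gamma>^n, with \<gamma> the largest of \<gamma>1, \<gamma>2 and 1, contains a shape
  of A1, and after removing its k1 vectors it is still large enough to contain a shape of A2.\<close>

lemma sum_lessThan_add_nat:
  fixes g :: "nat \<Rightarrow> 'b::comm_monoid_add"
  shows "(\<Sum>j<k1 + k2. g j) = (\<Sum>j<k1. g j) + (\<Sum>j<k2. g (k1 + j))"
proof -
  have "(\<Sum>j<k1 + k2. g j) = (\<Sum>j<k1. g j) + sum g {k1..<k1 + k2}"
    using sum.atLeastLessThan_concat[of 0 k1 "k1 + k2" g] by (simp add: atLeast0LessThan)
  also have "sum g {k1..<k1 + k2} = (\<Sum>j<k2. g (k1 + j))"
    using sum.shift_bounds_nat_ivl[of g 0 k1 k2] by (simp add: atLeast0LessThan add.commute)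
  finally show ?thesis .
qed

lemma is_solution_if_rows_in_span:
  assumes "rows_in_span k m A m' B" and "is_solution m' k B x"
  shows "is_solution m k A x"
  unfolding is_solution_def
proof (intro allI impI)
  fix i t assume "i < m"
  then obtain c where c: "\<forall>j<k. A i j = (\<Sum>l<m'. c l * B l j)"
    using assms(1) unfolding rows_in_span_def by blast
  have "(\<Sum>j<k. A i j * x j t) = (\<Sum>j<k. \<Sum>l<m'. c l * B l j * x j t)"
    using c by (simp add: sum_distrib_right)
  also have "\<dots> = (\<Sum>l<m'. c l * (\<Sum>j<k. B l j * x j t))"
    by (subst sum.swap) (simp add: sum_distrib_left mult.assoc)
  also have "\<dots> = 0"
    using assms(2) unfolding is_solution_def by simp
  finally show "(\<Sum>j<k. A i j * x j t) = 0" .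
qed

lemma is_solution_iff_if_equiv_systems:
  assumes "equiv_systems k m A m' B"
  shows "is_solution m k A x \<longleftrightarrow> is_solution m' k B x"
  using assms is_solution_if_rows_in_span unfolding equiv_systems_def by blast

lemma is_shape_cong:
  assumes "\<And>i j. i < m \<Longrightarrow> j < k \<Longrightarrow> A i j = B i j" and "\<And>j. j < k \<Longrightarrow> x j = y j"
  shows "is_shape m k A x \<longleftrightarrow> is_shape m k B y"
  using assms inj_on_cong[of "{..<k}" x y] unfolding is_shape_def is_solution_def by simp

lemma is_shape_permute:
  assumes "bij_betw \<sigma> {..<k} {..<k}"
  shows "is_shape m k (\<lambda>i j. A i (\<sigma> j)) (\<lambda>j. x (\<sigma> j)) \<longleftrightarrow> is_shape m k A x"
proof -
  have "is_solution m k (\<lambda>i j. A i (\<sigma> j)) (\<lambda>j. x (\<sigma> j)) \<longleftrightarrow> is_solution m k A x"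
    unfolding is_solution_def
    using sum.reindex_bij_betw[OF assms, of "\<lambda>j. A _ j * x j _"] by simp
  moreover have "inj_on (\<lambda>j. x (\<sigma> j)) {..<k} \<longleftrightarrow> inj_on x {..<k}"
    using assms comp_inj_on_iff[of \<sigma> "{..<k}" x] unfolding bij_betw_def by (simp add: comp_def)
  ultimately show ?thesis unfolding is_shape_def by simp
qed

lemma block_diag_solution_iff:
  "is_solution (m1 + m2) (k1 + k2) (block_diag m1 k1 A1 A2) x \<longleftrightarrow>
     is_solution m1 k1 A1 x \<and> is_solution m2 k2 A2 (\<lambda>j. x (k1 + j))"
proof -
  have upper: "(\<Sum>j<k1 + k2. block_diag m1 k1 A1 A2 i j * x j t) = (\<Sum>j<k1. A1 i j * x j t)"
    if "i < m1" for i t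
    using that by (simp add: sum_lessThan_add_nat block_diag_def)
  have lower: "(\<Sum>j<k1 + k2. block_diag m1 k1 A1 A2 (m1 + i) j * x j t)
      = (\<Sum>j<k2. A2 i j * x (k1 + j) t)" for i t
    by (simp add: sum_lessThan_add_nat block_diag_def)
  have rows: "(\<forall>i<m1 + m2. P i) \<longleftrightarrow> (\<forall>i<m1. P i) \<and> (\<forall>i<m2. P (m1 + i))" for P
    by (metis add_diff_inverse_nat nat_add_left_cancel_less trans_less_add1)
  show ?thesis
    unfolding is_solution_def rows by (simp add: upper lower)
qed

lemma inj_on_lessThan_add_iff:
  fixes x :: "nat \<Rightarrow> 'b"
  shows "inj_on x {..<k1 + k2} \<longleftrightarrow> inj_on x {..<k1} \<and> inj_on (\<lambda>j. x (k1 + j)) {..<k2}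
      \<and> x ` {..<k1} \<inter> (\<lambda>j. x (k1 + j)) ` {..<k2} = {}"
proof -
  have split: "{..<k1 + k2} = {..<k1} \<union> (+) k1 ` {..<k2}"
  proof (intro set_eqI iffI)
    fix j assume "j \<in> {..<k1 + k2}"
    then show "j \<in> {..<k1} \<union> (+) k1 ` {..<k2}"
      by (cases "j < k1") (auto intro!: image_eqI[of j _ "j - k1"])
  qed auto
  have disjoint: "{..<k1} \<inter> (+) k1 ` {..<k2} = {}"
    by auto
  have shift: "inj_on (\<lambda>j. x (k1 + j)) {..<k2} \<longleftrightarrow> inj_on x ((+) k1 ` {..<k2})"
    using comp_inj_on_iff[of "(+) k1" "{..<k2}" x] by (simp add: comp_def)
  have image_shift: "x ` ((+) k1 ` {..<k2}) = (\<lambda>j. x (k1 + j)) ` {..<k2}"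
    by (simp add: image_image)
  show ?thesis
    unfolding split inj_on_Un shift image_shift[symmetric] using disjoint
    by (simp add: Diff_triv Int_commute)
qed

lemma block_diag_shape_iff:
  "is_shape (m1 + m2) (k1 + k2) (block_diag m1 k1 A1 A2) x \<longleftrightarrow>
     is_shape m1 k1 A1 x \<and> is_shape m2 k2 A2 (\<lambda>j. x (k1 + j)) \<and>
     x ` {..<k1} \<inter> (\<lambda>j. x (k1 + j)) ` {..<k2} = {}"
  unfolding is_shape_def block_diag_solution_iff inj_on_lessThan_add_iff by blast

lemma block_diag_shape_append:
  assumes "is_shape m1 k1 A1 x" and "is_shape m2 k2 A2 y"
    and "x ` {..<k1} \<inter> y ` {..<k2} = {}"
  shows "is_shape (m1 + m2) (k1 + k2) (block_diag m1 k1 A1 A2)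
    (\<lambda>j. if j < k1 then x j else y (j - k1))" (is "is_shape _ _ _ ?z")
proof -
  have "is_shape m1 k1 A1 ?z \<longleftrightarrow> is_shape m1 k1 A1 x"
    by (rule is_shape_cong) simp_all
  moreover have "is_shape m2 k2 A2 (\<lambda>j. ?z (k1 + j)) \<longleftrightarrow> is_shape m2 k2 A2 y"
    by (rule is_shape_cong) simp_all
  moreover have "?z ` {..<k1} = x ` {..<k1}" and "(\<lambda>j. ?z (k1 + j)) ` {..<k2} = y ` {..<k2}"
    by (auto intro!: image_cong)
  ultimately show ?thesis
    unfolding block_diag_shape_iff using assms by simp
qed

lemma moderate_if_shapes_yield_shapes:
  assumes "moderate m k A"
    and "\<And>z. is_shape m k A z \<Longrightarrow> \<exists>x. (\<forall>j<k'. x j \<in> z ` {..<k}) \<and> is_shape m' k' B x"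
  shows "moderate m' k' B"
proof -
  obtain \<beta> \<gamma> :: real where bounds: "\<beta> > 0" "\<gamma> > 0" "\<gamma> < real (card (UNIV :: 'a set))"
    and dense: "\<And>n S. S \<subseteq> vecs n \<Longrightarrow> real (card S) \<ge> \<beta> * \<gamma> ^ n \<Longrightarrow>
      \<exists>z. (\<forall>j<k. z j \<in> S) \<and> is_shape m k A z"
    using assms(1) unfolding moderate_def by blast
  show ?thesis
    unfolding moderate_def
  proof (rule exI[of _ \<beta>], rule exI[of _ \<gamma>], intro conjI allI impI)
    fix n and S :: "(nat \<Rightarrow> 'a) set"
    assume "S \<subseteq> vecs n" and "real (card S) \<ge> \<beta> * \<gamma> ^ n"
    then obtain z where z_in_S: "\<forall>j<k. z j \<in> S" and "is_shape m k A z"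
      using dense by blast
    then obtain x where "\<forall>j<k'. x j \<in> z ` {..<k}" and "is_shape m' k' B x"
      using assms(2) by blast
    moreover have "z ` {..<k} \<subseteq> S"
      using z_in_S by auto
    ultimately show "\<exists>x. (\<forall>j<k'. x j \<in> S) \<and> is_shape m' k' B x"
      by blast
  qed (fact bounds)+
qed

lemma moderate_iff_if_equiv_systems:
  assumes "equiv_systems k m A m' B"
  shows "moderate m k A \<longleftrightarrow> moderate m' k B"
proof -
  have "is_shape m k A x \<longleftrightarrow> is_shape m' k B x" for x
    using is_solution_iff_if_equiv_systems[OF assms] unfolding is_shape_def by blast
  then show ?thesis
    using moderate_if_shapes_yield_shapes[where k' = k] by blast
qed

lemma moderate_permute_iff:
  assumes \<sigma>: "bij_betw \<sigma> {..<k} {..<k}"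
  shows "moderate m k (\<lambda>i j. A i (\<sigma> j)) \<longleftrightarrow> moderate m k A"
proof
  define \<tau> where "\<tau> = inv_into {..<k} \<sigma>"
  have \<tau>: "bij_betw \<tau> {..<k} {..<k}"
    unfolding \<tau>_def using \<sigma> by (rule bij_betw_inv_into)
  assume "moderate m k (\<lambda>i j. A i (\<sigma> j))"
  then show "moderate m k A"
  proof (rule moderate_if_shapes_yield_shapes)
    fix z assume shape: "is_shape m k (\<lambda>i j. A i (\<sigma> j)) z"
    have "is_shape m k A (\<lambda>j. z (\<tau> j))
        \<longleftrightarrow> is_shape m k (\<lambda>i j. A i (\<sigma> j)) (\<lambda>j. z (\<tau> (\<sigma> j)))"
      by (rule is_shape_permute[OF \<sigma>, symmetric])
    also have "\<dots> \<longleftrightarrow> is_shape m k (\<lambda>i j. A i (\<sigma> j)) z"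
      by (rule is_shape_cong) (simp_all add: \<tau>_def bij_betw_inv_into_left[OF \<sigma>])
    finally have "is_shape m k A (\<lambda>j. z (\<tau> j))"
      using shape by blast
    moreover have "z (\<tau> j) \<in> z ` {..<k}" if "j < k" for j
      using bij_betw_apply[OF \<tau>] that by simp
    ultimately show "\<exists>x. (\<forall>j<k. x j \<in> z ` {..<k}) \<and> is_shape m k A x"
      by (intro exI[of _ "\<lambda>j. z (\<tau> j)"]) blast
  qed
next
  assume "moderate m k A"
  then show "moderate m k (\<lambda>i j. A i (\<sigma> j))"
  proof (rule moderate_if_shapes_yield_shapes)
    fix z assume "is_shape m k A z"
    then have "is_shape m k (\<lambda>i j. A i (\<sigma> j)) (\<lambda>j. z (\<sigma> j))"
      by (simp only: is_shape_permute[OF \<sigma>])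
    moreover have "z (\<sigma> j) \<in> z ` {..<k}" if "j < k" for j
      using bij_betw_apply[OF \<sigma>] that by simp
    ultimately show "\<exists>x. (\<forall>j<k. x j \<in> z ` {..<k}) \<and> is_shape m k (\<lambda>i j. A i (\<sigma> j)) x"
      by (intro exI[of _ "\<lambda>j. z (\<sigma> j)"]) blast
  qed
qed

lemma moderate_of_block_diag:
  assumes "moderate (m1 + m2) (k1 + k2) (block_diag m1 k1 A1 A2)"
  shows "moderate m1 k1 A1" and "moderate m2 k2 A2"
proof -
  show "moderate m1 k1 A1"
    using assms
  proof (rule moderate_if_shapes_yield_shapes)
    fix z assume "is_shape (m1 + m2) (k1 + k2) (block_diag m1 k1 A1 A2) z"
    then show "\<exists>x. (\<forall>j<k1. x j \<in> z ` {..<k1 + k2}) \<and> is_shape m1 k1 A1 x"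
      unfolding block_diag_shape_iff by (intro exI[of _ z]) auto
  qed
  show "moderate m2 k2 A2"
    using assms
  proof (rule moderate_if_shapes_yield_shapes)
    fix z assume "is_shape (m1 + m2) (k1 + k2) (block_diag m1 k1 A1 A2) z"
    then show "\<exists>x. (\<forall>j<k2. x j \<in> z ` {..<k1 + k2}) \<and> is_shape m2 k2 A2 x"
      unfolding block_diag_shape_iff by (intro exI[of _ "\<lambda>j. z (k1 + j)"]) auto
  qed
qed

lemma card_minus_le_card_Diff_image:
  assumes "finite S"
  shows "real (card S) - real k \<le> real (card (S - x ` {..<k}))"
proof -
  have "card S - card (x ` {..<k}) \<le> card (S - x ` {..<k})"
    by (rule diff_card_le_card_Diff) simp
  moreover have "card (x ` {..<k}) \<le> k"
    using card_image_le[of "{..<k}" x] by simp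
  ultimately show ?thesis
    by linarith
qed

lemma one_less_card_field: "1 < card (UNIV :: 'a::{finite,field} set)"
proof -
  have "card {0 :: 'a, 1} \<le> card (UNIV :: 'a set)"
    by (rule card_mono) auto
  then show ?thesis
    by simp
qed

lemma weighted_powers_le_max_power:
  fixes \<beta>1 \<beta>2 \<gamma>1 \<gamma>2 c :: real
  assumes "0 \<le> \<beta>1" "0 \<le> \<beta>2" "0 \<le> \<gamma>1" "0 \<le> \<gamma>2" "0 \<le> c"
  shows "\<beta>1 * \<gamma>1 ^ n + \<beta>2 * \<gamma>2 ^ n + c \<le> (\<beta>1 + \<beta>2 + c) * max (max \<gamma>1 \<gamma>2) 1 ^ n"
proof -
  let ?\<gamma> = "max (max \<gamma>1 \<gamma>2) 1"
  have "\<gamma>1 ^ n \<le> ?\<gamma> ^ n" "\<gamma>2 ^ n \<le> ?\<gamma> ^ n" "1 \<le> ?\<gamma> ^ n"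
    using assms by (auto intro: power_mono one_le_power)
  then have "\<beta>1 * \<gamma>1 ^ n \<le> \<beta>1 * ?\<gamma> ^ n" "\<beta>2 * \<gamma>2 ^ n \<le> \<beta>2 * ?\<gamma> ^ n" "c * 1 \<le> c * ?\<gamma> ^ n"
    using assms by (simp_all only: mult_left_mono)
  then show ?thesis
    by (simp add: algebra_simps)
qed

lemma moderate_block_diag:
  assumes "moderate m1 k1 A1" and "moderate m2 k2 A2"
  shows "moderate (m1 + m2) (k1 + k2) (block_diag m1 k1 A1 A2)"
proof -
  obtain \<beta>1 \<gamma>1 :: real where bounds1: "\<beta>1 > 0" "\<gamma>1 > 0" "\<gamma>1 < real (card (UNIV :: 'a set))"
    and dense1: "\<And>n S. S \<subseteq> vecs n \<Longrightarrow> real (card S) \<ge> \<beta>1 * \<gamma>1 ^ n \<Longrightarrow>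
      \<exists>x. (\<forall>j<k1. x j \<in> S) \<and> is_shape m1 k1 A1 x"
    using assms(1) unfolding moderate_def by blast
  obtain \<beta>2 \<gamma>2 :: real where bounds2: "\<beta>2 > 0" "\<gamma>2 > 0" "\<gamma>2 < real (card (UNIV :: 'a set))"
    and dense2: "\<And>n S. S \<subseteq> vecs n \<Longrightarrow> real (card S) \<ge> \<beta>2 * \<gamma>2 ^ n \<Longrightarrow>
      \<exists>y. (\<forall>j<k2. y j \<in> S) \<and> is_shape m2 k2 A2 y"
    using assms(2) unfolding moderate_def by blast
  define \<gamma> where "\<gamma> = max (max \<gamma>1 \<gamma>2) 1"
  define \<beta> where "\<beta> = \<beta>1 + \<beta>2 + real k1"
  show ?thesis
    unfolding moderate_def
  proof (rule exI[of _ \<beta>], rule exI[of _ \<gamma>], intro conjI allI impI)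
    show "\<beta> > 0" "\<gamma> > 0"
      using bounds1 bounds2 unfolding \<beta>_def \<gamma>_def by auto
    show "\<gamma> < real (card (UNIV :: 'a set))"
      using bounds1 bounds2 one_less_card_field[where 'a = 'a] unfolding \<gamma>_def by auto
    fix n and S :: "(nat \<Rightarrow> 'a) set"
    assume S: "S \<subseteq> vecs n" and card_S: "real (card S) \<ge> \<beta> * \<gamma> ^ n"
    have split_bound: "\<beta>1 * \<gamma>1 ^ n + \<beta>2 * \<gamma>2 ^ n + real k1 \<le> \<beta> * \<gamma> ^ n"
      unfolding \<beta>_def \<gamma>_def using bounds1 bounds2 by (intro weighted_powers_le_max_power) auto
    have pos: "0 < \<beta>1 * \<gamma>1 ^ n" "0 < \<beta>2 * \<gamma>2 ^ n"
      using bounds1 bounds2 by simp_all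
    have dense_S: "\<beta>1 * \<gamma>1 ^ n \<le> real (card S)"
      using card_S split_bound pos(2) by linarith
    then have "finite S"
      using pos(1) card.infinite[of S] by fastforce
    obtain x where x: "\<forall>j<k1. x j \<in> S" "is_shape m1 k1 A1 x"
      using dense1[OF S dense_S] by blast
    define S' where "S' = S - x ` {..<k1}"
    have "\<beta>2 * \<gamma>2 ^ n \<le> real (card S')"
      using card_minus_le_card_Diff_image[OF \<open>finite S\<close>, of k1 x] card_S split_bound pos(1)
      unfolding S'_def by linarith
    then obtain y where y: "\<forall>j<k2. y j \<in> S'" "is_shape m2 k2 A2 y"
      using dense2[of S' n] S unfolding S'_def by blast
    have "x ` {..<k1} \<inter> y ` {..<k2} = {}"
      using y(1) unfolding S'_def by auto (metis image_eqI lessThan_iff)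
    then have "is_shape (m1 + m2) (k1 + k2) (block_diag m1 k1 A1 A2)
        (\<lambda>j. if j < k1 then x j else y (j - k1))"
      using x(2) y(2) by (intro block_diag_shape_append)
    moreover have "\<forall>j<k1 + k2. (if j < k1 then x j else y (j - k1)) \<in> S"
      using x(1) y(1) unfolding S'_def by auto
    ultimately show "\<exists>z. (\<forall>j<k1 + k2. z j \<in> S) \<and>
        is_shape (m1 + m2) (k1 + k2) (block_diag m1 k1 A1 A2) z"
      by (intro exI[of _ "\<lambda>j. if j < k1 then x j else y (j - k1)"]) blast
  qed
qed

theorem proposition2p2:
  fixes A :: "nat \<Rightarrow> nat \<Rightarrow> 'a::{finite,field}"
    and A1 A2 :: "nat \<Rightarrow> nat \<Rightarrow> 'a"
    and m k m1 m2 k1 k2 :: nat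
    and \<sigma> :: "nat \<Rightarrow> nat"
  assumes "m1 \<noteq> 0" "m2 \<noteq> 0" "k1 \<noteq> 0" "k2 \<noteq> 0"
    and "k = k1 + k2"
    and "bij_betw \<sigma> {..<k} {..<k}"
    and "equiv_systems k m A (m1 + m2) (\<lambda>i j. block_diag m1 k1 A1 A2 i (\<sigma> j))"
  shows "moderate m k A \<longleftrightarrow> moderate m1 k1 A1 \<and> moderate m2 k2 A2"
proof -
  have "moderate m k A \<longleftrightarrow> moderate (m1 + m2) k (\<lambda>i j. block_diag m1 k1 A1 A2 i (\<sigma> j))"
    using assms(7) by (rule moderate_iff_if_equiv_systems)
  also have "\<dots> \<longleftrightarrow> moderate (m1 + m2) (k1 + k2) (block_diag m1 k1 A1 A2)"
    using moderate_permute_iff[OF assms(6)] assms(5) by simp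
  also have "\<dots> \<longleftrightarrow> moderate m1 k1 A1 \<and> moderate m2 k2 A2"
    using moderate_of_block_diag moderate_block_diag by blast
  finally show ?thesis .
qed

end
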